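(* Let $K=3$ and let $l>s$ be nonnegative integers. Then \[ h(l,\,l,\,s+1)\ \ge\ h(l+1,\,l,\,s). \]
   Context: For a vector $\vec n=(n_1,n_2,n_3)$ of nonnegative integers, the following random process is run: stocks start at $\vec n^{(0)}=\vec n$; at each step $t=1,2,\dots$, as long as at least two coordinates of $\vec n^{(t-1)}$ are nonzero, an index $i$ is chosen uniformly at random (independently of the past) among the indices with $n_i^{(t-1)}>0$, and $\vec n^{(t)}=\vec n^{(t-1)}-\vec e_i$ ($\vec e_i$ the $i$-th standard unit vector). The process stops at the first time $T$ at which at most one coordinate is nonzero, and $h(\vec n)=\mathbb{E}[T]$. Equivalently, with $\operatorname{support}(\vec n)=\{i:n_i\ne 0\}$: $h(\vec n)=0$ if $|\operatorname{support}(\vec n)|\le1$, and otherwise $h(\vec n)=1+\frac{1}{|\operatorname{support}(\vec n)|}\sum_{i\in\operatorname{support}(\vec n)}h(\vec n-\vec e_i)$. *)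

theory Defs
  imports Complex_Main
begin

definition coord3 :: "nat \<times> nat \<times> nat \<Rightarrow> nat \<Rightarrow> nat" where
  "coord3 n i = (case n of (a, b, c) \<Rightarrow> if i = 0 then a else if i = 1 then b else c)"

definition supp3 :: "nat \<times> nat \<times> nat \<Rightarrow> nat set" where
  "supp3 n = {i \<in> {0, 1, 2}. coord3 n i \<noteq> 0}"

definition dec3 :: "nat \<times> nat \<times> nat \<Rightarrow> nat \<Rightarrow> nat \<times> nat \<times> nat" where
  "dec3 n i = (case n of (a, b, c) \<Rightarrow>
     if i = 0 then (a - 1, b, c) else if i = 1 then (a, b - 1, c) else (a, b, c - 1))"

function h :: "nat \<times> nat \<times> nat \<Rightarrow> real" where
  "h n = (if card (supp3 n) \<le> 1 then 0
          else 1 + (1 / real (card (supp3 n))) * (\<Sum>i\<in>supp3 n. h (dec3 n i)))"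
  by pat_completeness auto
termination
proof (relation "measure (\<lambda>(a, b, c). a + b + c)")
  show "wf (measure (\<lambda>(a, b, c). a + b + c))" by simp
next
  fix n :: "nat \<times> nat \<times> nat" and i
  assume "\<not> card (supp3 n) \<le> 1" "i \<in> supp3 n"
  then show "(dec3 n i, n) \<in> measure (\<lambda>(a, b, c). a + b + c)"
    by (cases n) (auto simp: supp3_def coord3_def dec3_def split: if_splits)
qed

end

theory Submission
  imports Defs
begin

text \<open>Let gain x y z = 2 h(x, y, z + 1) - h(x + 1, y, z) - h(x, y + 1, z) compare an extra unit in
the third stock with an extra unit in one of the first two. Where all coordinates are positive,
gain obeys the averaging recursion of h with the additive constant cancelled, so by induction on
x + y + z a sign propagates from the boundary: gain is nonnegative when z is the smallest coordinate
and nonpositive when z is the largest. On the faces z = 0 and y = 0 these signs reduce to two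
inequalities for the two-stock process h(p, q, 0): it grows towards balanced stocks, and it is
midpoint concave along antidiagonals, which in turn rests on closed forms for h(1, q, 0) and
h(2, q, 0). Ties are reduced to strict cases of the opposite sign by gain x y x = - gain x x y / 2.
The theorem is the case x = y = l, z = s.\<close>

declare h.simps[simp del]

lemma h_eq_0_if_card_supp3_le_1: "card (supp3 n) \<le> 1 \<Longrightarrow> h n = 0"
  by (subst h.simps) simp

lemma h_two_zeros: "h (a, 0, 0) = 0" "h (0, b, 0) = 0" "h (0, 0, c) = 0"
proof -
  have "supp3 (a, 0, 0) \<subseteq> {0}" "supp3 (0, b, 0) \<subseteq> {1}" "supp3 (0, 0, c) \<subseteq> {2}"
    by (auto simp: supp3_def coord3_def)
  then show "h (a, 0, 0) = 0" "h (0, b, 0) = 0" "h (0, 0, c) = 0"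
    by (auto intro!: h_eq_0_if_card_supp3_le_1 dest!: card_mono[rotated])
qed

lemma h_Suc_Suc_Suc:
  "h (Suc a, Suc b, Suc c) = 1 + (h (a, Suc b, Suc c) + h (Suc a, b, Suc c) + h (Suc a, Suc b, c)) / 3"
proof -
  have "supp3 (Suc a, Suc b, Suc c) = {0, 1, 2}" by (auto simp: supp3_def coord3_def)
  then show ?thesis by (subst h.simps) (simp add: dec3_def)
qed

lemma h_Suc_Suc_0: "h (Suc a, Suc b, 0) = 1 + (h (a, Suc b, 0) + h (Suc a, b, 0)) / 2"
proof -
  have "supp3 (Suc a, Suc b, 0) = {0, 1}" by (auto simp: supp3_def coord3_def)
  then show ?thesis by (subst h.simps) (simp add: dec3_def)
qed

lemma h_nonneg: "0 \<le> h n"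
proof (induction n rule: h.induct)
  case (1 n)
  then have "0 \<le> (\<Sum>i\<in>supp3 n. h (dec3 n i))" if "\<not> card (supp3 n) \<le> 1"
    using that by (auto intro: sum_nonneg)
  then show ?case
    by (subst h.simps) simp
qed

definition permute3 :: "(nat \<Rightarrow> nat) \<Rightarrow> nat \<times> nat \<times> nat \<Rightarrow> nat \<times> nat \<times> nat" where
  "permute3 \<sigma> n = (coord3 n (\<sigma> 0), coord3 n (\<sigma> 1), coord3 n (\<sigma> 2))"

lemma coord3_permute3: "i \<in> {0, 1, 2} \<Longrightarrow> coord3 (permute3 \<sigma> n) i = coord3 n (\<sigma> i)"
  by (auto simp: permute3_def coord3_def)

lemma coord3_dec3:
  "i \<in> {0, 1, 2} \<Longrightarrow> j \<in> {0, 1, 2} \<Longrightarrow> coord3 (dec3 n i) j = coord3 n j - (if j = i then 1 else 0)"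
  by (cases n) (auto simp: coord3_def dec3_def)

lemma triple_eqI:
  assumes "\<And>i. i \<in> {0, 1, 2} \<Longrightarrow> coord3 n i = coord3 m i"
  shows "n = m"
  using assms[of 0] assms[of 1] assms[of 2] by (cases n, cases m) (simp add: coord3_def)

lemma supp3_subset: "supp3 n \<subseteq> {0, 1, 2}"
  unfolding supp3_def by blast

lemma supp3_permute3:
  assumes "\<And>i. i \<in> {0, 1, 2} \<Longrightarrow> \<sigma> i \<in> {0, 1, 2}"
  shows "supp3 (permute3 \<sigma> n) = {i \<in> {0, 1, 2}. \<sigma> i \<in> supp3 n}"
  unfolding supp3_def
proof (intro Collect_cong conj_cong[OF refl])
  fix i :: nat
  assume i: "i \<in> {0, 1, 2}"
  show "coord3 (permute3 \<sigma> n) i \<noteq> 0 \<longleftrightarrow> \<sigma> i \<in> {j \<in> {0, 1, 2}. coord3 n j \<noteq> 0}"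
    using coord3_permute3[OF i] assms[OF i] by simp
qed

lemma bij_betw_supp3_permute3:
  assumes "bij_betw \<sigma> {0, 1, 2} {0, 1, 2}"
  shows "bij_betw \<sigma> (supp3 (permute3 \<sigma> n)) (supp3 n)"
proof (rule bij_betw_subset[OF assms supp3_subset])
  have "\<sigma> ` {i \<in> {0, 1, 2}. \<sigma> i \<in> supp3 n} = \<sigma> ` {0, 1, 2} \<inter> supp3 n"
    by blast
  also have "\<dots> = supp3 n"
    using bij_betw_imp_surj_on[OF assms] supp3_subset by blast
  finally show "\<sigma> ` supp3 (permute3 \<sigma> n) = supp3 n"
    using supp3_permute3[OF bij_betw_apply[OF assms]] by simp
qed

lemma dec3_permute3:
  assumes "bij_betw \<sigma> {0, 1, 2} {0, 1, 2}" and i: "i \<in> {0, 1, 2}"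
  shows "dec3 (permute3 \<sigma> n) i = permute3 \<sigma> (dec3 n (\<sigma> i))"
proof (rule triple_eqI)
  fix j :: nat
  assume j: "j \<in> {0, 1, 2}"
  have "\<sigma> j = \<sigma> i \<longleftrightarrow> j = i"
    using bij_betw_imp_inj_on[OF assms(1)] j i by (rule inj_on_eq_iff)
  then show "coord3 (dec3 (permute3 \<sigma> n) i) j = coord3 (permute3 \<sigma> (dec3 n (\<sigma> i))) j"
    using coord3_dec3[OF i j] coord3_permute3[OF j]
      coord3_dec3[OF bij_betw_apply[OF assms(1) i] bij_betw_apply[OF assms(1) j]]
    by simp
qed

lemma h_permute3: "bij_betw \<sigma> {0, 1, 2} {0, 1, 2} \<Longrightarrow> h (permute3 \<sigma> n) = h n"
proof (induction n rule: h.induct)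
  case (1 n)
  let ?m = "permute3 \<sigma> n"
  have bij: "bij_betw \<sigma> (supp3 ?m) (supp3 n)"
    using "1.prems" by (rule bij_betw_supp3_permute3)
  then have card: "card (supp3 ?m) = card (supp3 n)"
    by (rule bij_betw_same_card)
  have "(\<Sum>i\<in>supp3 ?m. h (dec3 ?m i)) = (\<Sum>i\<in>supp3 n. h (dec3 n i))"
    if "\<not> card (supp3 n) \<le> 1"
  proof -
    have "(\<Sum>i\<in>supp3 ?m. h (dec3 ?m i)) = (\<Sum>i\<in>supp3 ?m. h (dec3 n (\<sigma> i)))"
    proof (rule sum.cong)
      fix i assume i: "i \<in> supp3 ?m"
      have "dec3 ?m i = permute3 \<sigma> (dec3 n (\<sigma> i))"
        using i supp3_subset by (intro dec3_permute3[OF "1.prems"]) blast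
      moreover have "\<sigma> i \<in> supp3 n"
        using bij i by (auto simp: bij_betw_def)
      ultimately show "h (dec3 ?m i) = h (dec3 n (\<sigma> i))"
        using "1.IH" "1.prems" that by simp
    qed simp
    also have "\<dots> = (\<Sum>j\<in>supp3 n. h (dec3 n j))"
      using bij by (rule sum.reindex_bij_betw)
    finally show ?thesis .
  qed
  then show ?case
    by (subst (1 2) h.simps) (simp add: card)
qed

lemma h_swap12: "h (a, b, c) = h (b, a, c)"
proof -
  let ?\<sigma> = "\<lambda>i::nat. if i = 0 then 1 else if i = 1 then 0 else i"
  have "bij_betw ?\<sigma> {0, 1, 2} {0, 1, 2}"
    by (auto simp: bij_betw_def inj_on_def)
  from h_permute3[OF this, of "(a, b, c)"] show ?thesis
    by (simp add: permute3_def coord3_def)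
qed

lemma h_swap23: "h (a, b, c) = h (a, c, b)"
proof -
  let ?\<sigma> = "\<lambda>i::nat. if i = 1 then 2 else if i = 2 then 1 else i"
  have "bij_betw ?\<sigma> {0, 1, 2} {0, 1, 2}"
    by (auto simp: bij_betw_def inj_on_def)
  from h_permute3[OF this, of "(a, b, c)"] show ?thesis
    by (simp add: permute3_def coord3_def)
qed

lemma h_face_balance: "a \<le> b \<Longrightarrow> h (a, Suc b, 0) \<le> h (Suc a, b, 0)"
proof (induction "a + b" arbitrary: a b rule: less_induct)
  case less
  consider "a = b" | "a = 0" "0 < b" | a' b' where "a = Suc a'" "b = Suc b'" "a' < b'"
    using less.prems by (cases a; cases b) (auto simp: le_less)
  then show ?case
  proof cases
    case 1
    then show ?thesis using h_swap12[of a "Suc a" 0] by simp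
  next
    case 2
    then show ?thesis by (simp add: h_two_zeros h_nonneg)
  next
    case 3
    have "h (a', Suc b, 0) \<le> h (a, b, 0)"
      using less.hyps[of a' b] 3 by simp
    moreover have "h (a, b, 0) \<le> h (Suc a, b', 0)"
      using less.hyps[of a b'] 3 by simp
    ultimately show ?thesis
      using h_Suc_Suc_0[of a' b] h_Suc_Suc_0[of a b'] 3 by simp
  qed
qed

lemma h_1_q_0: "h (1, q, 0) = 2 - 2 / 2 ^ q"
proof (induction q)
  case 0
  then show ?case by (simp add: h_two_zeros)
next
  case (Suc q)
  have "h (1, Suc q, 0) = 1 + h (1, q, 0) / 2"
    using h_Suc_Suc_0[of 0 q] by (simp add: h_two_zeros)
  also have "\<dots> = 2 - 2 / 2 ^ Suc q"
    using Suc.IH by (simp add: field_simps)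
  finally show ?case .
qed

lemma h_2_q_0: "h (2, q, 0) = 4 - (real q + 4) / 2 ^ q"
proof (induction q)
  case 0
  then show ?case by (simp add: h_two_zeros)
next
  case (Suc q)
  have "h (2, Suc q, 0) = 1 + (h (1, Suc q, 0) + h (2, q, 0)) / 2"
    using h_Suc_Suc_0[of 1 q] by (simp add: numeral_2_eq_2)
  then show ?case
    using Suc.IH h_1_q_0[of "Suc q"] by (simp add: field_simps)
qed

lemma h_2_q_0_le: "h (2, q, 0) \<le> 2 * h (1, Suc q, 0)"
proof -
  have "(2::real) / 2 ^ q \<le> (real q + 4) / 2 ^ q"
    by (simp add: divide_right_mono)
  then show ?thesis
    using h_1_q_0[of "Suc q"] h_2_q_0[of q] by simp
qed

lemma h_face_midpoint_concave:
  "h (Suc (Suc p), q, 0) + h (p, Suc (Suc q), 0) \<le> 2 * h (Suc p, Suc q, 0)"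
proof (induction "p + q" arbitrary: p q rule: less_induct)
  case less
  consider "p = 0" | "q = 0" | p' q' where "p = Suc p'" "q = Suc q'"
    by (cases p; cases q) auto
  then show ?case
  proof cases
    case 1
    then show ?thesis
      using h_2_q_0_le[of q] by (simp add: h_two_zeros numeral_2_eq_2)
  next
    case 2
    then show ?thesis
      using h_2_q_0_le[of p] h_swap12[of p 2 0] h_swap12[of "Suc p" 1 0]
      by (simp add: h_two_zeros numeral_2_eq_2)
  next
    case 3
    have "h (Suc p, q, 0) + h (p', Suc (Suc q), 0) \<le> 2 * h (p, Suc q, 0)"
      using less.hyps[of p' q] 3 by simp
    moreover have "h (Suc (Suc p), q', 0) + h (p, Suc q, 0) \<le> 2 * h (Suc p, q, 0)"
      using less.hyps[of p q'] 3 by simp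
    ultimately show ?thesis
      using h_Suc_Suc_0[of "Suc p" q'] h_Suc_Suc_0[of p' "Suc q"] h_Suc_Suc_0[of p q]
      unfolding 3 by argo
  qed
qed

definition gain :: "nat \<Rightarrow> nat \<Rightarrow> nat \<Rightarrow> real" where
  "gain x y z = 2 * h (x, y, Suc z) - h (Suc x, y, z) - h (x, Suc y, z)"

lemma gain_swap: "gain x y z = gain y x z"
  unfolding gain_def
  using h_swap12[of x y "Suc z"] h_swap12[of "Suc x" y z] h_swap12[of x "Suc y" z] by simp

lemma gain_x_y_0_nonneg: "0 \<le> gain p q 0"
proof (induction "p + q" arbitrary: p q rule: less_induct)
  case less
  consider "p = 0" | "q = 0" | p' q' where "p = Suc p'" "q = Suc q'"
    by (cases p; cases q) auto
  then show ?case
  proof cases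
    case 1
    have "h (0, q, 1) = h (1, q, 0)"
      using h_swap12[of 0 q 1] h_swap23[of q 0 1] h_swap12[of q 1 0] by simp
    then show ?thesis
      using 1 h_nonneg[of "(1, q, 0)"] by (simp add: gain_def h_two_zeros)
  next
    case 2
    have "h (p, 0, 1) = h (p, 1, 0)"
      by (rule h_swap23)
    then show ?thesis
      using 2 h_nonneg[of "(p, 1, 0)"] by (simp add: gain_def h_two_zeros)
  next
    case 3
    have "h (p, q, 0) + h (p', Suc q, 0) \<le> 2 * h (p', q, 1)"
      using less.hyps[of p' q] 3 by (simp add: gain_def)
    moreover have "h (Suc p, q', 0) + h (p, q, 0) \<le> 2 * h (p, q', 1)"
      using less.hyps[of p q'] 3 by (simp add: gain_def)
    moreover have "h (Suc p, q', 0) + h (p', Suc q, 0) \<le> 2 * h (p, q, 0)"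
      using h_face_midpoint_concave[of p' q'] 3 by simp
    ultimately show ?thesis
      using h_Suc_Suc_Suc[of p' q' 0] h_Suc_Suc_0[of p q'] h_Suc_Suc_0[of p' q]
      unfolding gain_def 3 One_nat_def by argo
  qed
qed

lemma gain_x_0_z_eq: "gain p 0 q = 2 * h (p, Suc q, 0) - h (Suc p, q, 0) - h (p, q, 1)"
  unfolding gain_def using h_swap23[of p 0 "Suc q"] h_swap23[of "Suc p" 0 q] h_swap23[of p 1 q]
  by simp

lemma gain_x_0_z_nonpos: "p \<le> q \<Longrightarrow> gain p 0 q \<le> 0"
proof (induction "p + q" arbitrary: p q rule: less_induct)
  case less
  consider "p = 0" | p' where "p = Suc p'" "q = p" | p' q' where "p = Suc p'" "q = Suc q'" "p < q"
    using less.prems by (cases p; cases q) (auto simp: le_less)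
  then show ?case
  proof cases
    case 1
    then show ?thesis
      using h_nonneg[of "(1, q, 0)"] h_nonneg[of "(0, q, 1)"] by (simp add: gain_x_0_z_eq h_two_zeros)
  next
    case 2
    have "h (p, p, 0) + h (p', Suc p, 0) \<le> 2 * h (p', p, 1)"
      using gain_x_y_0_nonneg[of p' p] 2 by (simp add: gain_def)
    moreover have "h (p', Suc p, 0) \<le> h (p, p, 0)"
      using h_face_balance[of p' p] 2 by simp
    ultimately show ?thesis
      using h_Suc_Suc_Suc[of p' p' 0] h_Suc_Suc_0[of p' p] h_swap12[of p p' 1] h_swap12[of "Suc p" p 0]
      unfolding gain_x_0_z_eq 2 One_nat_def by argo
  next
    case 3
    have "2 * h (p', Suc q, 0) \<le> h (p, q, 0) + h (p', q, 1)"
      using less.hyps[of p' q] 3 by (simp add: gain_x_0_z_eq)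
    moreover have "2 * h (p, q, 0) \<le> h (Suc p, q', 0) + h (p, q', 1)"
      using less.hyps[of p q'] 3 by (simp add: gain_x_0_z_eq)
    moreover have "h (p', Suc q, 0) \<le> h (p, q, 0)"
      using h_face_balance[of p' q] 3 by simp
    moreover have "h (p, q, 0) \<le> h (Suc p, q', 0)"
      using h_face_balance[of p q'] 3 by simp
    ultimately show ?thesis
      using h_Suc_Suc_0[of p q'] h_Suc_Suc_Suc[of p' q' 0] h_Suc_Suc_0[of p' q]
      unfolding gain_x_0_z_eq 3 One_nat_def by argo
  qed
qed

lemma gain_Suc_Suc_Suc:
  "gain (Suc x) (Suc y) (Suc z) = (gain x (Suc y) (Suc z) + gain (Suc x) y (Suc z) + gain (Suc x) (Suc y) z) / 3"
  unfolding gain_def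
  using h_Suc_Suc_Suc[of x y "Suc z"] h_Suc_Suc_Suc[of "Suc x" y z] h_Suc_Suc_Suc[of x "Suc y" z]
  by argo

lemma gain_diag: "gain x x x = 0"
  unfolding gain_def using h_swap12[of x "Suc x" x] h_swap23[of x x "Suc x"] by simp

lemma gain_tie: "gain x y x = - gain x x y / 2"
  unfolding gain_def
  using h_swap12[of y x "Suc x"] h_swap23[of x "Suc x" y] h_swap23[of x "Suc y" x]
    h_swap12[of "Suc x" x y] h_swap23[of "Suc x" x y] h_swap12[of x y "Suc x"]
  by argo

lemma gain_nonneg_step:
  assumes IH: "\<And>x' y' z'. x' + y' + z' < x + y + z \<Longrightarrow> z' \<le> x' \<Longrightarrow> z' \<le> y' \<Longrightarrow> 0 \<le> gain x' y' z'"
    and "z < x" "z < y"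
  shows "0 \<le> gain x y z"
proof (cases z)
  case 0
  then show ?thesis by (simp add: gain_x_y_0_nonneg)
next
  case (Suc z')
  with assms obtain x' y' where x: "x = Suc x'" and y: "y = Suc y'"
    by (cases x; cases y) auto
  have "0 \<le> gain x' y z" "0 \<le> gain x y' z" "0 \<le> gain x y z'"
    by (rule IH; use assms x y Suc in simp)+
  then show ?thesis
    unfolding x y Suc gain_Suc_Suc_Suc by simp
qed

lemma gain_nonpos_step:
  assumes IH: "\<And>x' y' z'. x' + y' + z' < x + y + z \<Longrightarrow> x' \<le> z' \<Longrightarrow> y' \<le> z' \<Longrightarrow> gain x' y' z' \<le> 0"
    and "x < z" "y < z"
  shows "gain x y z \<le> 0"
proof -
  consider "y = 0" | "x = 0" | x' y' z' where "x = Suc x'" "y = Suc y'" "z = Suc z'"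
    using assms by (cases x; cases y; cases z) auto
  then show ?thesis
  proof cases
    case 1
    then show ?thesis using gain_x_0_z_nonpos[of x z] assms by simp
  next
    case 2
    then show ?thesis using gain_x_0_z_nonpos[of y z] gain_swap[of x y z] assms by simp
  next
    case 3
    have "gain x' y z \<le> 0" "gain x y' z \<le> 0" "gain x y z' \<le> 0"
      by (rule IH; use assms 3 in simp)+
    then show ?thesis
      unfolding 3 gain_Suc_Suc_Suc by simp
  qed
qed

lemma gain_sign:
  "(z \<le> x \<longrightarrow> z \<le> y \<longrightarrow> 0 \<le> gain x y z) \<and> (x \<le> z \<longrightarrow> y \<le> z \<longrightarrow> gain x y z \<le> 0)"
proof (induction "x + y + z" arbitrary: x y z rule: less_induct)
  case less
  have nonneg: "0 \<le> gain x' y' z'" if "x' + y' + z' = x + y + z" "z' < x'" "z' < y'" for x' y' z'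
    by (rule gain_nonneg_step) (use less.hyps that in auto)
  have nonpos: "gain x' y' z' \<le> 0" if "x' + y' + z' = x + y + z" "x' < z'" "y' < z'" for x' y' z'
    by (rule gain_nonpos_step) (use less.hyps that in auto)
  have tie_nonneg: "0 \<le> gain x' y' x'" if "x' + y' + x' = x + y + z" "x' \<le> y'" for x' y'
    using nonpos[of x' x' y'] that gain_tie[of x' y'] gain_diag[of x'] by (cases "x' = y'") auto
  have tie_nonpos: "gain x' y' x' \<le> 0" if "x' + y' + x' = x + y + z" "y' \<le> x'" for x' y'
    using nonneg[of x' x' y'] that gain_tie[of x' y'] gain_diag[of x'] by (cases "x' = y'") auto
  show ?case
  proof (intro conjI impI)
    assume "z \<le> x" "z \<le> y"
    then consider "z < x" "z < y" | "z = x" | "z = y"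
      by linarith
    then show "0 \<le> gain x y z"
      using nonneg tie_nonneg[of x y] tie_nonneg[of y x] gain_swap[of x y z] \<open>z \<le> x\<close> \<open>z \<le> y\<close>
      by cases (simp_all add: add.commute)
  next
    assume "x \<le> z" "y \<le> z"
    then consider "x < z" "y < z" | "z = x" | "z = y"
      by linarith
    then show "gain x y z \<le> 0"
      using nonpos tie_nonpos[of x y] tie_nonpos[of y x] gain_swap[of x y z] \<open>x \<le> z\<close> \<open>y \<le> z\<close>
      by cases (simp_all add: add.commute)
  qed
qed

theorem lemma4:
  fixes l s :: nat
  assumes "l > s"
  shows "h (l, l, s + 1) \<ge> h (l + 1, l, s)"
proof -
  have "0 \<le> gain l l s"
    using gain_sign[of s l l] assms by simp
  moreover have "h (l, Suc l, s) = h (Suc l, l, s)"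
    by (rule h_swap12)
  ultimately show ?thesis
    by (simp add: gain_def)
qed

end
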